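(* Let $R\ge 2$, $s=R+2$, and let $r$ be any positive integer. Then $\mathrm{Perf}(s,r,R)=\emptyset$, i.e. there is no non-trivial $R$-perfect code in $\mathbb F_q^{s\times r}$ with respect to the NRT metric.
   Context: $q$ is a prime power, $\mathbb F_q^{s\times r}$ the set of $s\times r$ matrices over $\mathbb F_q$ with rows in $\mathbb F_q^{1\times r}$. For a row $y=(y_1,\dots,y_r)$, the NRT weight is $w(y)=\max\{j: y_j\neq 0\}$ if $y\ne0$ and $w(0)=0$; for a matrix, $w(x)=\sum_i w(x_i)$. The NRT metric is $d(x,y)=w(x-y)$; $B(c,R)=\{x: d(x,c)\le R\}$. A code $C$ is $R$-perfect if the balls $B(c,R)$, $c\in C$, are pairwise disjoint and cover $\mathbb F_q^{s\times r}$; non-trivial means $|C|>1$ and $C\ne\mathbb F_q^{s\times r}$. $\mathrm{Perf}(s,r,R)$ is the set of non-trivial $R$-perfect codes in $\mathbb F_q^{s\times r}$. *)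

theory Defs
  imports Main
begin

text \<open>Matrices over a field 'a, indexed from 1: row i in {1..s}, column j in {1..r}.
  Entries outside this range are required to be 0 (see nrt_space).\<close>

type_synonym 'a mat = "nat \<Rightarrow> nat \<Rightarrow> 'a"

definition row_weight :: "nat \<Rightarrow> (nat \<Rightarrow> 'a::zero) \<Rightarrow> nat" where
  "row_weight r y = (if \<exists>j\<in>{1..r}. y j \<noteq> 0 then Max {j\<in>{1..r}. y j \<noteq> 0} else 0)"

definition nrt_weight :: "nat \<Rightarrow> nat \<Rightarrow> 'a::zero mat \<Rightarrow> nat" where
  "nrt_weight s r x = (\<Sum>i=1..s. row_weight r (x i))"

definition nrt_dist :: "nat \<Rightarrow> nat \<Rightarrow> 'a::ab_group_add mat \<Rightarrow> 'a mat \<Rightarrow> nat" where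
  "nrt_dist s r x y = nrt_weight s r (\<lambda>i j. x i j - y i j)"

definition nrt_space :: "nat \<Rightarrow> nat \<Rightarrow> 'a::zero mat set" where
  "nrt_space s r = {x. \<forall>i j. x i j \<noteq> 0 \<longrightarrow> i \<in> {1..s} \<and> j \<in> {1..r}}"

definition nrt_ball :: "nat \<Rightarrow> nat \<Rightarrow> 'a::ab_group_add mat \<Rightarrow> nat \<Rightarrow> 'a mat set" where
  "nrt_ball s r c R = {x \<in> nrt_space s r. nrt_dist s r x c \<le> R}"

definition perfect_code :: "nat \<Rightarrow> nat \<Rightarrow> nat \<Rightarrow> 'a::ab_group_add mat set \<Rightarrow> bool" where
  "perfect_code s r R C \<longleftrightarrow>
     C \<subseteq> nrt_space s r \<and>
     (\<forall>c\<in>C. \<forall>c'\<in>C. c \<noteq> c' \<longrightarrow> nrt_ball s r c R \<inter> nrt_ball s r c' R = {}) \<and>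
     (\<Union>c\<in>C. nrt_ball s r c R) = nrt_space s r"

definition Perf :: "nat \<Rightarrow> nat \<Rightarrow> nat \<Rightarrow> 'a::ab_group_add mat set set" where
  "Perf s r R = {C. perfect_code s r R C \<and> card C > 1 \<and> C \<noteq> nrt_space s r}"

end

theory Submission
  imports Defs
begin

(* Let C be an R-perfect code in F^((R+2) x r) and c0 \<in> C. Two codewords c, c' coincide as soon as
   the rows split into two groups on each of which c - c' has weight at most R: the matrix agreeing
   with c on one group and with c' on the other lies in both balls.
   For a row z let y_z be c0 plus a 1 in the first column of every row except z, a point at distance
   R + 1 from c0. Splitting the rows suitably shows that the codeword c_z covering y_z agrees with y_z
   outside row z, while c_z - c0 has weight between 2 and R in row z. Hence c_1 and c_2 differ only in
   rows 1 and 2, each time by weight at most R, so c_1 = c_2; but row 1 of c_2 - c0 has weight at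
   most 1. *)

lemma le_row_weight:
  assumes "j \<in> {1..r}" and "f j \<noteq> 0"
  shows "j \<le> row_weight r f"
  unfolding row_weight_def using assms by (auto intro!: Max_ge)

lemma row_weight_le:
  assumes "\<And>j. j \<in> {1..r} \<Longrightarrow> f j \<noteq> 0 \<Longrightarrow> j \<le> k"
  shows "row_weight r f \<le> k"
  unfolding row_weight_def using assms by (auto intro!: Max.boundedI)

lemma row_weight_eq_0_iff: "row_weight r f = 0 \<longleftrightarrow> (\<forall>j\<in>{1..r}. f j = 0)"
  by (metis atLeastAtMost_iff le_0_eq le_row_weight not_one_le_zero row_weight_le)

lemma row_weight_cong:
  assumes "\<And>j. j \<in> {1..r} \<Longrightarrow> f j = 0 \<longleftrightarrow> g j = 0"
  shows "row_weight r f = row_weight r g"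
proof -
  have "{j \<in> {1..r}. f j \<noteq> 0} = {j \<in> {1..r}. g j \<noteq> 0}"
    and "(\<exists>j\<in>{1..r}. f j \<noteq> 0) \<longleftrightarrow> (\<exists>j\<in>{1..r}. g j \<noteq> 0)"
    using assms by blast+
  then show ?thesis unfolding row_weight_def by presburger
qed

lemma row_weight_minus_commute:
  "row_weight r (\<lambda>j. a j - b j) = row_weight r (\<lambda>j. b j - (a j :: 'a::ab_group_add))"
  by (rule row_weight_cong) auto

lemma row_weight_diff_le_max:
  "row_weight r (\<lambda>j. a j - b j) \<le> max (row_weight r a) (row_weight r (b :: nat \<Rightarrow> 'a::ab_group_add))"
proof (rule row_weight_le)
  fix j assume "j \<in> {1..r}" and "a j - b j \<noteq> 0"
  then have "a j \<noteq> 0 \<or> b j \<noteq> 0" by auto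
  then show "j \<le> max (row_weight r a) (row_weight r b)"
    using le_row_weight[OF \<open>j \<in> {1..r}\<close>, of a] le_row_weight[OF \<open>j \<in> {1..r}\<close>, of b]
    by (meson le_max_iff_disj)
qed

definition ones_col1_except :: "nat \<Rightarrow> nat \<Rightarrow> 'a::{zero,one} mat" where
  "ones_col1_except s z = (\<lambda>i j. if i \<in> {1..s} \<and> i \<noteq> z \<and> j = 1 then 1 else 0)"

lemma row_weight_ones_col1_except:
  "row_weight r (ones_col1_except s z i :: nat \<Rightarrow> 'a::zero_neq_one)
     = (if 1 \<le> r \<and> i \<in> {1..s} \<and> i \<noteq> z then 1 else 0)"
proof (cases "1 \<le> r \<and> i \<in> {1..s} \<and> i \<noteq> z")
  case True
  have "row_weight r (ones_col1_except s z i :: nat \<Rightarrow> 'a) \<le> 1"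
    by (rule row_weight_le) (auto simp: ones_col1_except_def split: if_splits)
  moreover have "1 \<le> row_weight r (ones_col1_except s z i :: nat \<Rightarrow> 'a)"
    by (rule le_row_weight) (use True in \<open>auto simp: ones_col1_except_def\<close>)
  ultimately show ?thesis using True by simp
next
  case False
  then show ?thesis by (auto simp: row_weight_eq_0_iff ones_col1_except_def)
qed

lemma sum_row_weight_ones_col1_except:
  assumes "1 \<le> r" and "A \<subseteq> {1..s}"
  shows "(\<Sum>i\<in>A. row_weight r (ones_col1_except s z i :: nat \<Rightarrow> 'a::zero_neq_one)) = card (A - {z})"
proof -
  have "finite A" using assms(2) finite_subset by blast
  have "(\<Sum>i\<in>A. row_weight r (ones_col1_except s z i :: nat \<Rightarrow> 'a)) = (\<Sum>i\<in>A - {z}. 1)"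
    using assms \<open>finite A\<close> by (intro sum.mono_neutral_cong_right) (auto simp: row_weight_ones_col1_except)
  then show ?thesis by simp
qed

lemma nrt_space_add:
  fixes x y :: "'a::monoid_add mat"
  assumes "x \<in> nrt_space s r" and "y \<in> nrt_space s r"
  shows "(\<lambda>i j. x i j + y i j) \<in> nrt_space s r"
  unfolding nrt_space_def
proof (intro CollectI allI impI)
  fix i j assume "x i j + y i j \<noteq> 0"
  then have "x i j \<noteq> 0 \<or> y i j \<noteq> 0" by auto
  then show "i \<in> {1..s} \<and> j \<in> {1..r}" using assms unfolding nrt_space_def by blast
qed

lemma nrt_space_diff:
  fixes x y :: "'a::group_add mat"
  assumes "x \<in> nrt_space s r" and "y \<in> nrt_space s r"
  shows "(\<lambda>i j. x i j - y i j) \<in> nrt_space s r"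
  unfolding nrt_space_def
proof (intro CollectI allI impI)
  fix i j assume "x i j - y i j \<noteq> 0"
  then have "x i j \<noteq> 0 \<or> y i j \<noteq> 0" by auto
  then show "i \<in> {1..s} \<and> j \<in> {1..r}" using assms unfolding nrt_space_def by blast
qed

lemma ones_col1_except_in_nrt_space: "1 \<le> r \<Longrightarrow> ones_col1_except s z \<in> nrt_space s r"
  unfolding nrt_space_def ones_col1_except_def by simp

lemma perfect_codeD:
  assumes "perfect_code s r R C"
  shows perfect_code_subset: "C \<subseteq> nrt_space s r"
    and perfect_code_disjoint:
      "\<And>c c'. c \<in> C \<Longrightarrow> c' \<in> C \<Longrightarrow> c \<noteq> c' \<Longrightarrow> nrt_ball s r c R \<inter> nrt_ball s r c' R = {}"
    and perfect_code_covers: "\<And>x. x \<in> nrt_space s r \<Longrightarrow> \<exists>c\<in>C. nrt_dist s r x c \<le> R"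
  using assms unfolding perfect_code_def nrt_ball_def by blast+

lemma perfect_code_eq_if_split:
  fixes C :: "'a::ab_group_add mat set"
  assumes perfect: "perfect_code s r R C" and "c \<in> C" and "c' \<in> C"
    and inside: "(\<Sum>i\<in>{1..s} \<inter> S. row_weight r (\<lambda>j. c i j - c' i j)) \<le> R"
    and outside: "(\<Sum>i\<in>{1..s} - S. row_weight r (\<lambda>j. c i j - c' i j)) \<le> R"
  shows "c = c'"
proof (rule ccontr)
  assume "c \<noteq> c'"
  define p where "p i = (if i \<in> S then c i else c' i)" for i
  have "p \<in> nrt_space s r"
    using perfect_code_subset[OF perfect] \<open>c \<in> C\<close> \<open>c' \<in> C\<close> unfolding p_def nrt_space_def by auto
  have "nrt_dist s r p c' = (\<Sum>i\<in>{1..s}. if i \<in> S then row_weight r (\<lambda>j. c i j - c' i j) else 0)"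
    unfolding nrt_dist_def nrt_weight_def p_def by (rule sum.cong) (auto simp: row_weight_eq_0_iff)
  also have "\<dots> \<le> R" using inside by (simp only: sum.inter_restrict[OF finite_atLeastAtMost])
  finally have "p \<in> nrt_ball s r c' R" using \<open>p \<in> nrt_space s r\<close> unfolding nrt_ball_def by blast
  have "nrt_dist s r p c = (\<Sum>i\<in>{1..s}. if i \<in> -S then row_weight r (\<lambda>j. c i j - c' i j) else 0)"
    unfolding nrt_dist_def nrt_weight_def p_def
    by (rule sum.cong) (simp_all add: row_weight_eq_0_iff row_weight_minus_commute[of r "c' i" "c i" for i])
  also have "\<dots> \<le> R" using outside by (simp only: Diff_eq sum.inter_restrict[OF finite_atLeastAtMost])
  finally have "p \<in> nrt_ball s r c R" using \<open>p \<in> nrt_space s r\<close> unfolding nrt_ball_def by blast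
  with \<open>p \<in> nrt_ball s r c' R\<close> show False
    using perfect_code_disjoint[OF perfect \<open>c \<in> C\<close> \<open>c' \<in> C\<close> \<open>c \<noteq> c'\<close>] by blast
qed

context
  fixes C :: "'a::{ab_group_add,zero_neq_one} mat set"
    and s r R z :: nat and c0 c :: "'a mat"
  assumes perfect: "perfect_code s r R C" and s_eq: "s = R + 2" and R_ge: "2 \<le> R" and r_ge: "1 \<le> r"
    and c0: "c0 \<in> C" and c: "c \<in> C" and z: "z \<in> {1..s}"
    and covers: "nrt_dist s r (\<lambda>i j. c0 i j + ones_col1_except s z i j) c \<le> R"
begin

lemma covering_codeword_ne_base: "c \<noteq> c0"
proof
  assume "c = c0"
  then have "nrt_dist s r (\<lambda>i j. c0 i j + ones_col1_except s z i j) c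
      = (\<Sum>i\<in>{1..s}. row_weight r (ones_col1_except s z i :: nat \<Rightarrow> 'a))"
    unfolding nrt_dist_def nrt_weight_def by simp
  also have "\<dots> = R + 1"
    using sum_row_weight_ones_col1_except[OF r_ge, of "{1..s}" s z] z s_eq by simp
  finally show False using covers by simp
qed

lemma covering_residual_off_row:
  assumes i: "i \<in> {1..s}" "i \<noteq> z"
  shows "row_weight r (\<lambda>j. c0 i j + ones_col1_except s z i j - c i j) = 0"
proof (rule ccontr)
  define u where "u k = (\<lambda>j. c0 k j + ones_col1_except s z k j - c k j)" for k
  define S where "S = {k. row_weight r (u k) \<noteq> 0}"
  assume "row_weight r (\<lambda>j. c0 i j + ones_col1_except s z i j - c i j) \<noteq> 0"
  then have "i \<in> S" by (simp add: S_def u_def)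
  have diff_le: "row_weight r (\<lambda>j. c k j - c0 k j)
      \<le> max (row_weight r (ones_col1_except s z k :: nat \<Rightarrow> 'a)) (row_weight r (u k))" for k
    using row_weight_diff_le_max[of r "ones_col1_except s z k" "u k"] unfolding u_def by simp
  have "(\<Sum>k\<in>{1..s} \<inter> S. row_weight r (\<lambda>j. c k j - c0 k j)) \<le> (\<Sum>k\<in>{1..s} \<inter> S. row_weight r (u k))"
  proof (rule sum_mono)
    fix k assume "k \<in> {1..s} \<inter> S"
    then have "1 \<le> row_weight r (u k)" by (simp add: S_def)
    then show "row_weight r (\<lambda>j. c k j - c0 k j) \<le> row_weight r (u k)"
      using diff_le[of k] by (simp add: row_weight_ones_col1_except)
  qed
  also have "\<dots> \<le> (\<Sum>k\<in>{1..s}. row_weight r (u k))" by (rule sum_mono2) auto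
  also have "\<dots> \<le> R" using covers unfolding nrt_dist_def nrt_weight_def u_def .
  finally have inside: "(\<Sum>k\<in>{1..s} \<inter> S. row_weight r (\<lambda>j. c k j - c0 k j)) \<le> R" .
  have "(\<Sum>k\<in>{1..s} - S. row_weight r (\<lambda>j. c k j - c0 k j))
      \<le> (\<Sum>k\<in>{1..s} - S. row_weight r (ones_col1_except s z k :: nat \<Rightarrow> 'a))"
  proof (rule sum_mono)
    fix k assume "k \<in> {1..s} - S"
    then have "row_weight r (u k) = 0" by (simp add: S_def)
    then show "row_weight r (\<lambda>j. c k j - c0 k j) \<le> row_weight r (ones_col1_except s z k :: nat \<Rightarrow> 'a)"
      using diff_le[of k] by simp
  qed
  also have "\<dots> = card ({1..s} - S - {z})" by (rule sum_row_weight_ones_col1_except[OF r_ge]) auto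
  also have "\<dots> \<le> card ({1..s} - {i, z})" by (rule card_mono) (use \<open>i \<in> S\<close> in auto)
  also have "\<dots> = R" using i z s_eq by (simp add: card_Diff_subset)
  finally have outside: "(\<Sum>k\<in>{1..s} - S. row_weight r (\<lambda>j. c k j - c0 k j)) \<le> R" .
  from perfect_code_eq_if_split[OF perfect c c0 inside outside] covering_codeword_ne_base
  show False by blast
qed

lemma covering_codeword_off_row:
  assumes "i \<noteq> z"
  shows "(\<lambda>j. c i j - c0 i j) = ones_col1_except s z i"
proof -
  have space: "C \<subseteq> nrt_space s r" by (rule perfect_code_subset[OF perfect])
  then have "(\<lambda>k j. c0 k j + ones_col1_except s z k j) \<in> nrt_space s r"
    using c0 nrt_space_add[OF _ ones_col1_except_in_nrt_space[OF r_ge]] by blast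
  then have residual_space: "(\<lambda>k j. c0 k j + ones_col1_except s z k j - c k j) \<in> nrt_space s r"
    using c space nrt_space_diff by blast
  have "c0 i j + ones_col1_except s z i j - c i j = 0" for j
  proof (cases "i \<in> {1..s} \<and> j \<in> {1..r}")
    case True
    then show ?thesis using covering_residual_off_row[of i] assms by (simp add: row_weight_eq_0_iff)
  next
    case False
    then show ?thesis using residual_space unfolding nrt_space_def by blast
  qed
  then show ?thesis by (simp add: fun_eq_iff algebra_simps)
qed

lemma covering_codeword_row_le: "row_weight r (\<lambda>j. c k j - c0 k j) \<le> R"
proof (cases "k = z")
  case True
  have "row_weight r (\<lambda>j. c z j - c0 z j)
      = row_weight r (\<lambda>j. c0 z j + ones_col1_except s z z j - c z j)"
    by (simp add: ones_col1_except_def row_weight_minus_commute[of r "c z"])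
  also have "\<dots> \<le> (\<Sum>k\<in>{1..s}. row_weight r (\<lambda>j. c0 k j + ones_col1_except s z k j - c k j))"
    by (rule member_le_sum) (use z in auto)
  also have "\<dots> \<le> R" using covers unfolding nrt_dist_def nrt_weight_def .
  finally show ?thesis using True by simp
next
  case False
  then show ?thesis
    using R_ge by (simp add: covering_codeword_off_row row_weight_ones_col1_except)
qed

lemma covering_codeword_own_row_ge: "2 \<le> row_weight r (\<lambda>j. c z j - c0 z j)"
proof (rule ccontr)
  assume "\<not> 2 \<le> row_weight r (\<lambda>j. c z j - c0 z j)"
  define j0 :: nat where "j0 = (if z = 1 then 2 else 1)"
  have j0: "j0 \<in> {1..s}" "j0 \<noteq> z" using z s_eq unfolding j0_def by auto
  have "(\<Sum>k\<in>{1..s} \<inter> {z, j0}. row_weight r (\<lambda>j. c k j - c0 k j))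
      = row_weight r (\<lambda>j. c z j - c0 z j) + row_weight r (\<lambda>j. c j0 j - c0 j0 j)"
    using z j0 by (simp add: Int_absorb1)
  also have "\<dots> \<le> R"
    using \<open>\<not> 2 \<le> _\<close> R_ge j0 by (simp add: covering_codeword_off_row row_weight_ones_col1_except)
  finally have inside: "(\<Sum>k\<in>{1..s} \<inter> {z, j0}. row_weight r (\<lambda>j. c k j - c0 k j)) \<le> R" .
  have "(\<Sum>k\<in>{1..s} - {z, j0}. row_weight r (\<lambda>j. c k j - c0 k j))
      = (\<Sum>k\<in>{1..s} - {z, j0}. row_weight r (ones_col1_except s z k :: nat \<Rightarrow> 'a))"
    by (rule sum.cong) (simp_all add: covering_codeword_off_row)
  also have "\<dots> = card ({1..s} - {z, j0} - {z})" by (rule sum_row_weight_ones_col1_except[OF r_ge]) auto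
  also have "\<dots> = R" using z j0 s_eq by (simp add: card_Diff_subset)
  finally have outside: "(\<Sum>k\<in>{1..s} - {z, j0}. row_weight r (\<lambda>j. c k j - c0 k j)) \<le> R" by simp
  from perfect_code_eq_if_split[OF perfect c c0 inside outside] covering_codeword_ne_base
  show False by blast
qed

end

lemma covering_codewords_eq:
  fixes C :: "'a::{ab_group_add,zero_neq_one} mat set"
  assumes perfect: "perfect_code s r R C" and s_eq: "s = R + 2" and R_ge: "2 \<le> R" and r_ge: "1 \<le> r"
    and c0: "c0 \<in> C" and c: "c \<in> C" and c': "c' \<in> C"
    and z: "z \<in> {1..s}" and z': "z' \<in> {1..s}" and "z \<noteq> z'"
    and covers: "nrt_dist s r (\<lambda>i j. c0 i j + ones_col1_except s z i j) c \<le> R"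
    and covers': "nrt_dist s r (\<lambda>i j. c0 i j + ones_col1_except s z' i j) c' \<le> R"
  shows "c = c'"
proof -
  note facts = perfect s_eq R_ge r_ge c0
  have diff_le: "row_weight r (\<lambda>j. c k j - c' k j) \<le> R" for k
  proof -
    have "(\<lambda>j. c k j - c' k j) = (\<lambda>j. (c k j - c0 k j) - (c' k j - c0 k j))" by simp
    then show ?thesis
      using row_weight_diff_le_max[of r "\<lambda>j. c k j - c0 k j" "\<lambda>j. c' k j - c0 k j"]
        covering_codeword_row_le[OF facts c z covers, of k]
        covering_codeword_row_le[OF facts c' z' covers', of k]
      by simp
  qed
  have rows_eq: "row_weight r (\<lambda>j. c k j - c' k j) = 0" if "k \<noteq> z" and "k \<noteq> z'" for k
  proof -
    have "(\<lambda>j. c k j - c0 k j) = (\<lambda>j. c' k j - c0 k j)"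
      using covering_codeword_off_row[OF facts c z covers \<open>k \<noteq> z\<close>]
        covering_codeword_off_row[OF facts c' z' covers' \<open>k \<noteq> z'\<close>] that
      by (simp add: ones_col1_except_def)
    then show ?thesis by (simp add: fun_eq_iff row_weight_eq_0_iff)
  qed
  have inside: "(\<Sum>k\<in>{1..s} \<inter> {z}. row_weight r (\<lambda>j. c k j - c' k j)) \<le> R"
    using z diff_le by (simp add: Int_absorb1)
  have "(\<Sum>k\<in>{1..s} - {z}. row_weight r (\<lambda>j. c k j - c' k j))
      = (\<Sum>k\<in>{z'}. row_weight r (\<lambda>j. c k j - c' k j))"
    by (rule sum.mono_neutral_right) (use z' \<open>z \<noteq> z'\<close> rows_eq in auto)
  then have outside: "(\<Sum>k\<in>{1..s} - {z}. row_weight r (\<lambda>j. c k j - c' k j)) \<le> R"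
    using diff_le by simp
  show ?thesis by (rule perfect_code_eq_if_split[OF perfect c c' inside outside])
qed

lemma no_perfect_code:
  fixes C :: "'a::{ab_group_add,zero_neq_one} mat set"
  assumes R_ge: "2 \<le> R" and r_ge: "1 \<le> r"
  shows "\<not> perfect_code (R + 2) r R C"
proof
  define s where "s = R + 2"
  assume "perfect_code (R + 2) r R C"
  then have perfect: "perfect_code s r R C" by (simp add: s_def)
  have "(\<lambda>i j. 0) \<in> nrt_space s r" by (simp add: nrt_space_def)
  then obtain c0 where c0: "c0 \<in> C" using perfect_code_covers[OF perfect] by blast
  have "(\<lambda>i j. c0 i j + ones_col1_except s z i j) \<in> nrt_space s r" for z
    using c0 perfect_code_subset[OF perfect] nrt_space_add ones_col1_except_in_nrt_space[OF r_ge]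
    by blast
  then obtain c1 c2 where c1: "c1 \<in> C" "nrt_dist s r (\<lambda>i j. c0 i j + ones_col1_except s 1 i j) c1 \<le> R"
    and c2: "c2 \<in> C" "nrt_dist s r (\<lambda>i j. c0 i j + ones_col1_except s 2 i j) c2 \<le> R"
    using perfect_code_covers[OF perfect] by meson
  note facts = perfect s_def R_ge r_ge c0
  have rows: "1 \<in> {1..s}" "2 \<in> {1..s}" by (simp_all add: s_def)
  have "c1 = c2" by (rule covering_codewords_eq[OF facts c1(1) c2(1) rows _ c1(2) c2(2)]) simp
  then have "row_weight r (\<lambda>j. c1 1 j - c0 1 j) = row_weight r (ones_col1_except s 2 1 :: nat \<Rightarrow> 'a)"
    using covering_codeword_off_row[OF facts c2(1) rows(2) c2(2)] by simp
  also have "\<dots> \<le> 1" by (simp add: row_weight_ones_col1_except)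
  finally show False using covering_codeword_own_row_ge[OF facts c1(1) rows(1) c1(2)] by simp
qed

theorem mainTheorem13:
  fixes R r :: nat
  assumes "R \<ge> 2" and "r \<ge> 1"
  shows "(Perf (R + 2) r R :: ('a::{finite,field}) mat set set) = {}"
  using no_perfect_code[OF assms] unfolding Perf_def by blast

end
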